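(* Consider the simplified model in the context (common Rician factor $\kappa$, intercell factor $\alpha$, orthogonal LoS components with $\frac1N\bar{\mathbf H}_{jj}^H\bar{\mathbf H}_{jj}=\frac{\kappa}{1+\kappa}\mathbf I_K$ for all $j$) under the asymptotic regime of the context. Then the deterministic approximations $\bar\gamma^{\rm MRC}_{jk}$ and $\bar\gamma^{\rm MRT}_{jk}$ both reduce to $$\frac{1}{\frac{1}{\nu N\rho}\frac{1+\kappa}{\tau}+\frac{K}{N\nu}\Big(\bar L\frac{1+\kappa}{\tau}+\frac1{\tau^2}\frac{\kappa}{1+\kappa}\Big)+\frac{\alpha}{\tau^2}\Big(\bar L-\frac1{1+\kappa}\Big)}=\frac{1}{\frac{\bar L}{N\rho}\frac{1+\kappa}{\tau}+\frac1{\rho^{\rm tr}}A+\frac KN\bar LB+\frac{\alpha}{\tau^2}\Big(\bar L-\frac1{1+\kappa}\Big)},$$ where $\rho=\rho^{\rm dl}$ for MRT and $\rho=\rho^{\rm ul}$ for MRC, $\nu=\frac{\rho^{\rm tr}}{1+\rho^{\rm tr}\bar L}$, $\bar L=\alpha(L-1)+\frac1{1+\kappa}$, $\tau=\frac1{1+\kappa}+\frac{\kappa}{\nu}$, $A=\big(\frac KN\bar L+\frac1{N\rho}\big)\frac{1+\kappa}{\tau}+\frac KN\frac1{\tau^2}\frac{\kappa}{1+\kappa}$ and $B=\bar L\frac{1+\kappa}{\tau}+\frac1{\tau^2}\frac{\kappa}{1+\kappa}$.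
   Context: Simplified model: $L$ cells, each BS with $N$ antennas and $K$ single-antenna UEs; channel from UE $k$ in cell $l$ to BS $j$: $\mathbf h_{jjk}=\sqrt{\frac1{1+\kappa}}\mathbf z_{jjk}+\sqrt{\frac{\kappa}{1+\kappa}}\mathbf a_{jjk}$, $\mathbf h_{jlk}=\sqrt\alpha\,\mathbf z_{jlk}$ ($l\ne j$), with independent $\mathbf z_{jlk}\sim\mathcal{CN}(\mathbf 0,\mathbf I_N)$, intercell factor $\alpha\in(0,1]$, Rician factor $\kappa\ge0$, deterministic $\mathbf a_{jjk}\in\mathbb C^N$. Thus $d_{jjk}=\frac1{1+\kappa}$, $d_{jlk}=\alpha$ ($l\ne j$), LoS vectors $\bar{\mathbf h}_{jjk}=\sqrt{\frac{\kappa}{1+\kappa}}\mathbf a_{jjk}$, $\bar{\mathbf H}_{jj}=[\bar{\mathbf h}_{jj1},\dots,\bar{\mathbf h}_{jjK}]$. With training SNR $\rho^{\rm tr}>0$, $\phi_{jlk}=\frac{d_{jjk}d_{jlk}}{1/\rho^{\rm tr}+\sum_nd_{jnk}}$ (so $\phi_{jjk}=\frac{\nu}{(1+\kappa)^2}$, $\phi_{jlk}=\frac{\alpha\nu}{1+\kappa}$ for $l\ne j$). Let $\bar\theta_l=(\frac1K\sum_k(\phi_{llk}+\frac1N\bar{\mathbf h}_{llk}^H\bar{\mathbf h}_{llk}))^{-1}$. Deterministic approximations: $\bar\gamma^{\rm MRT}_{jk}=\frac{\bar\theta_j(\phi_{jjk}+\frac1N\bar{\mathbf h}_{jjk}^H\bar{\mathbf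 h}_{jjk})^2}{\frac1{N\rho^{\rm dl}}+s^{\rm MRT}_{jk}+\bar\theta_j\sum_{i\ne k}|\frac1N\bar{\mathbf h}_{jji}^H\bar{\mathbf h}_{jjk}|^2+\sum_{l\ne j}\bar\theta_l\phi_{ljk}^2}$, $s^{\rm MRT}_{jk}=\frac1N\sum_l\sum_i\bar\theta_ld_{ljk}(\phi_{lli}+\frac1N\bar{\mathbf h}_{lli}^H\bar{\mathbf h}_{lli})+\frac1N\sum_{i\ne k}\bar\theta_j\phi_{jji}\frac1N\bar{\mathbf h}_{jjk}^H\bar{\mathbf h}_{jjk}$; $\bar\gamma^{\rm MRC}_{jk}=\frac{(\phi_{jjk}+\frac1N\bar{\mathbf h}_{jjk}^H\bar{\mathbf h}_{jjk})^2}{\frac1{N\rho^{\rm ul}\bar\theta_j}+s^{\rm MRC}_{jk}+\sum_{i\ne k}|\frac1N\bar{\mathbf h}_{jjk}^H\bar{\mathbf h}_{jji}|^2+\sum_{l\ne j}\phi_{jlk}^2}$, $s^{\rm MRC}_{jk}=\frac1N\sum_l\sum_id_{jli}(\phi_{jjk}+\frac1N\bar{\mathbf h}_{jjk}^H\bar{\mathbf h}_{jjk})+\frac1N\sum_{i\ne k}\phi_{jjk}\frac1N\bar{\mathbf h}_{jji}^H\bar{\mathbf h}_{jji}$. Asymptotic regime: $N,K\to\infty$ with $1\le\liminf N/K\le\limsup N/K<\infty$; large-scale coefficients bounded away from $0$ and $\infty$; $\limsup_N\|\bar{\mathbf H}_{jj}\|<\infty$ (spectral norm). *)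

theory Defs
  imports "HOL-Analysis.Analysis" "HOL-Library.Liminf_Limsup"
begin

text \<open>Cells are indexed by 0..<L, UEs by 0..<K, antennas by 0..<N.
  d j l k = d_{jlk} (large-scale coefficient of the channel from UE k in cell l to BS j);
  hb j k :: nat \<Rightarrow> complex is the LoS vector \<bar>h_{jjk} (component m for m < N).\<close>

definition gram :: "nat \<Rightarrow> (nat \<Rightarrow> complex) \<Rightarrow> (nat \<Rightarrow> complex) \<Rightarrow> complex" where
  "gram N x y = (\<Sum>m<N. cnj (x m) * y m) / of_nat N"

definition phi :: "(nat \<Rightarrow> nat \<Rightarrow> nat \<Rightarrow> real) \<Rightarrow> nat \<Rightarrow> real \<Rightarrow> nat \<Rightarrow> nat \<Rightarrow> nat \<Rightarrow> real" where
  "phi d L rtr j l k = d j j k * d j l k / (1 / rtr + (\<Sum>n<L. d j n k))"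

definition nrm :: "nat \<Rightarrow> (nat \<Rightarrow> nat \<Rightarrow> nat \<Rightarrow> complex) \<Rightarrow> nat \<Rightarrow> nat \<Rightarrow> real" where
  "nrm N hb j k = Re (gram N (hb j k) (hb j k))"

definition theta_bar ::
  "(nat \<Rightarrow> nat \<Rightarrow> nat \<Rightarrow> real) \<Rightarrow> (nat \<Rightarrow> nat \<Rightarrow> nat \<Rightarrow> complex) \<Rightarrow> nat \<Rightarrow> nat \<Rightarrow> nat \<Rightarrow> real \<Rightarrow> nat \<Rightarrow> real" where
  "theta_bar d hb N K L rtr l =
     inverse ((1 / real K) * (\<Sum>k<K. phi d L rtr l l k + nrm N hb l k))"

definition s_MRT ::
  "(nat \<Rightarrow> nat \<Rightarrow> nat \<Rightarrow> real) \<Rightarrow> (nat \<Rightarrow> nat \<Rightarrow> nat \<Rightarrow> complex) \<Rightarrow> nat \<Rightarrow> nat \<Rightarrow> nat \<Rightarrow> real \<Rightarrow> nat \<Rightarrow> nat \<Rightarrow> real" where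
  "s_MRT d hb N K L rtr j k =
     (1 / real N) * (\<Sum>l<L. \<Sum>i<K. theta_bar d hb N K L rtr l * d l j k * (phi d L rtr l l i + nrm N hb l i))
     + (1 / real N) * (\<Sum>i\<in>{..<K} - {k}. theta_bar d hb N K L rtr j * phi d L rtr j j i * nrm N hb j k)"

definition gamma_MRT ::
  "(nat \<Rightarrow> nat \<Rightarrow> nat \<Rightarrow> real) \<Rightarrow> (nat \<Rightarrow> nat \<Rightarrow> nat \<Rightarrow> complex) \<Rightarrow> nat \<Rightarrow> nat \<Rightarrow> nat \<Rightarrow> real \<Rightarrow> real \<Rightarrow> nat \<Rightarrow> nat \<Rightarrow> real" where
  "gamma_MRT d hb N K L rtr rdl j k =
     theta_bar d hb N K L rtr j * (phi d L rtr j j k + nrm N hb j k)^2 /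
     (1 / (real N * rdl) + s_MRT d hb N K L rtr j k
      + theta_bar d hb N K L rtr j * (\<Sum>i\<in>{..<K} - {k}. (cmod (gram N (hb j i) (hb j k)))^2)
      + (\<Sum>l\<in>{..<L} - {j}. theta_bar d hb N K L rtr l * (phi d L rtr l j k)^2))"

definition s_MRC ::
  "(nat \<Rightarrow> nat \<Rightarrow> nat \<Rightarrow> real) \<Rightarrow> (nat \<Rightarrow> nat \<Rightarrow> nat \<Rightarrow> complex) \<Rightarrow> nat \<Rightarrow> nat \<Rightarrow> nat \<Rightarrow> real \<Rightarrow> nat \<Rightarrow> nat \<Rightarrow> real" where
  "s_MRC d hb N K L rtr j k =
     (1 / real N) * (\<Sum>l<L. \<Sum>i<K. d j l i * (phi d L rtr j j k + nrm N hb j k))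
     + (1 / real N) * (\<Sum>i\<in>{..<K} - {k}. phi d L rtr j j k * nrm N hb j i)"

definition gamma_MRC ::
  "(nat \<Rightarrow> nat \<Rightarrow> nat \<Rightarrow> real) \<Rightarrow> (nat \<Rightarrow> nat \<Rightarrow> nat \<Rightarrow> complex) \<Rightarrow> nat \<Rightarrow> nat \<Rightarrow> nat \<Rightarrow> real \<Rightarrow> real \<Rightarrow> nat \<Rightarrow> nat \<Rightarrow> real" where
  "gamma_MRC d hb N K L rtr rul j k =
     (phi d L rtr j j k + nrm N hb j k)^2 /
     (1 / (real N * rul * theta_bar d hb N K L rtr j) + s_MRC d hb N K L rtr j k
      + (\<Sum>i\<in>{..<K} - {k}. (cmod (gram N (hb j k) (hb j i)))^2)
      + (\<Sum>l\<in>{..<L} - {j}. (phi d L rtr j l k)^2))"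

definition d_simple :: "real \<Rightarrow> real \<Rightarrow> nat \<Rightarrow> nat \<Rightarrow> nat \<Rightarrow> real" where
  "d_simple kappa alpha j l k = (if l = j then 1 / (1 + kappa) else alpha)"

definition hb_simple :: "real \<Rightarrow> (nat \<Rightarrow> nat \<Rightarrow> nat \<Rightarrow> complex) \<Rightarrow> nat \<Rightarrow> nat \<Rightarrow> nat \<Rightarrow> complex" where
  "hb_simple kappa a j k m = complex_of_real (sqrt (kappa / (1 + kappa))) * a j k m"

definition Lbar :: "nat \<Rightarrow> real \<Rightarrow> real \<Rightarrow> real" where
  "Lbar L alpha kappa = alpha * (real L - 1) + 1 / (1 + kappa)"

definition nu :: "nat \<Rightarrow> real \<Rightarrow> real \<Rightarrow> real \<Rightarrow> real" where
  "nu L alpha kappa rtr = rtr / (1 + rtr * Lbar L alpha kappa)"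

definition tau :: "nat \<Rightarrow> real \<Rightarrow> real \<Rightarrow> real \<Rightarrow> real" where
  "tau L alpha kappa rtr = 1 / (1 + kappa) + kappa / nu L alpha kappa rtr"

definition A_coef :: "nat \<Rightarrow> nat \<Rightarrow> nat \<Rightarrow> real \<Rightarrow> real \<Rightarrow> real \<Rightarrow> real \<Rightarrow> real" where
  "A_coef N K L alpha kappa rtr rho =
     (let Lb = Lbar L alpha kappa; t = tau L alpha kappa rtr in
      (real K / real N * Lb + 1 / (real N * rho)) * ((1 + kappa) / t)
      + real K / real N * (1 / t^2) * (kappa / (1 + kappa)))"

definition B_coef :: "nat \<Rightarrow> real \<Rightarrow> real \<Rightarrow> real \<Rightarrow> real" where
  "B_coef L alpha kappa rtr =
     (let Lb = Lbar L alpha kappa; t = tau L alpha kappa rtr in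
      Lb * ((1 + kappa) / t) + (1 / t^2) * (kappa / (1 + kappa)))"

definition sinr_lim1 :: "nat \<Rightarrow> nat \<Rightarrow> nat \<Rightarrow> real \<Rightarrow> real \<Rightarrow> real \<Rightarrow> real \<Rightarrow> real" where
  "sinr_lim1 N K L alpha kappa rtr rho =
     (let Lb = Lbar L alpha kappa; v = nu L alpha kappa rtr; t = tau L alpha kappa rtr in
      1 / (1 / (v * real N * rho) * ((1 + kappa) / t)
           + real K / (real N * v) * (Lb * ((1 + kappa) / t) + (1 / t^2) * (kappa / (1 + kappa)))
           + alpha / t^2 * (Lb - 1 / (1 + kappa))))"

definition sinr_lim2 :: "nat \<Rightarrow> nat \<Rightarrow> nat \<Rightarrow> real \<Rightarrow> real \<Rightarrow> real \<Rightarrow> real \<Rightarrow> real" where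
  "sinr_lim2 N K L alpha kappa rtr rho =
     (let Lb = Lbar L alpha kappa; t = tau L alpha kappa rtr in
      1 / (Lb / (real N * rho) * ((1 + kappa) / t)
           + 1 / rtr * A_coef N K L alpha kappa rtr rho
           + real K / real N * Lb * B_coef L alpha kappa rtr
           + alpha / t^2 * (Lb - 1 / (1 + kappa))))"

end

theory Submission
  imports Defs
begin

(* The per-user quantity phi_jjk + |h_jjk|^2/N equals p = nu tau/(1+kappa) in every cell, so
   theta_bar = 1/p, and after multiplying out p both gamma_MRC and gamma_MRT are exactly 1 / D(K-1),
   where D(m) is the denominator of the first closed form with the LoS term of the other users of
   the cell weighted by m instead of K; the closed form itself is 1 / D(K).  Now
   D(K) - D(K-1) = O(1/N), while D(K-1) >= (K/N) Lbar (1+kappa)/(nu tau) stays bounded away from 0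
   as long as N/K is bounded, so the two reciprocals merge.  The second closed form is the first one
   rewritten with 1/nu = 1/rtr + Lbar. *)

lemma Lbar_pos: "0 \<le> alpha \<Longrightarrow> 0 \<le> kappa \<Longrightarrow> 1 \<le> L \<Longrightarrow> 0 < Lbar L alpha kappa"
  unfolding Lbar_def by (auto intro!: add_nonneg_pos)

lemma nu_pos:
  assumes "0 \<le> alpha" "0 \<le> kappa" "1 \<le> L" "0 < rtr"
  shows "0 < nu L alpha kappa rtr"
  unfolding nu_def using Lbar_pos[OF assms(1-3)] assms(4) by (simp add: add_pos_pos)

lemma inverse_nu:
  assumes "0 \<le> alpha" "0 \<le> kappa" "1 \<le> L" "0 < rtr"
  shows "1 / nu L alpha kappa rtr = 1 / rtr + Lbar L alpha kappa"
  using Lbar_pos[OF assms(1-3)] assms(4) by (simp add: nu_def field_simps)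

lemma tau_pos:
  assumes "0 \<le> alpha" "0 \<le> kappa" "1 \<le> L" "0 < rtr"
  shows "0 < tau L alpha kappa rtr"
  unfolding tau_def using nu_pos[OF assms] assms(2) by (simp add: add_pos_nonneg)

lemma nu_mul_tau:
  assumes "0 \<le> alpha" "0 \<le> kappa" "1 \<le> L" "0 < rtr"
  shows "nu L alpha kappa rtr * tau L alpha kappa rtr / (1 + kappa)
    = nu L alpha kappa rtr / (1 + kappa)\<^sup>2 + kappa / (1 + kappa)"
proof -
  define c where "c = 1 + kappa"
  have "0 < c" using assms(2) by (simp add: c_def)
  then show ?thesis
    using nu_pos[OF assms] unfolding tau_def c_def[symmetric]
    by (simp add: field_simps power2_eq_square)
qed

lemma d_simple_commute: "d_simple kappa alpha l j k = d_simple kappa alpha j l k"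
  by (simp add: d_simple_def eq_commute)

lemma sum_d_simple:
  assumes "j < L"
  shows "(\<Sum>l<L. d_simple kappa alpha j l k) = Lbar L alpha kappa"
proof -
  have "(\<Sum>l<L. d_simple kappa alpha j l k)
      = d_simple kappa alpha j j k + (\<Sum>l\<in>{..<L} - {j}. d_simple kappa alpha j l k)"
    using assms by (simp add: sum.remove)
  also have "(\<Sum>l\<in>{..<L} - {j}. d_simple kappa alpha j l k) = (real L - 1) * alpha"
    using assms by (simp add: d_simple_def)
  finally show ?thesis by (simp add: Lbar_def d_simple_def)
qed

lemma phi_d_simple:
  assumes "0 \<le> alpha" "0 \<le> kappa" "1 \<le> L" "0 < rtr" "j < L"
  shows "phi (d_simple kappa alpha) L rtr j l k
    = d_simple kappa alpha j j k * d_simple kappa alpha j l k * nu L alpha kappa rtr"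
  by (simp add: phi_def sum_d_simple[OF assms(5)] inverse_nu[OF assms(1-4), symmetric])

definition sinr_denom :: "nat \<Rightarrow> nat \<Rightarrow> nat \<Rightarrow> real \<Rightarrow> real \<Rightarrow> real \<Rightarrow> real \<Rightarrow> real \<Rightarrow> real" where
  "sinr_denom N K L alpha kappa rtr rho m =
     (let Lb = Lbar L alpha kappa; v = nu L alpha kappa rtr; t = tau L alpha kappa rtr in
      1 / (v * real N * rho) * ((1 + kappa) / t)
      + real K / (real N * v) * (Lb * ((1 + kappa) / t))
      + m / (real N * v) * ((1 / t^2) * (kappa / (1 + kappa)))
      + alpha / t^2 * (Lb - 1 / (1 + kappa)))"

lemma sinr_lim1_eq_sinr_denom:
  "sinr_lim1 N K L alpha kappa rtr rho = 1 / sinr_denom N K L alpha kappa rtr rho (real K)"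
  by (simp add: sinr_lim1_def sinr_denom_def Let_def distrib_left add.assoc)

lemma sinr_denom_diff:
  "sinr_denom N K L alpha kappa rtr rho m' - sinr_denom N K L alpha kappa rtr rho m
    = (m' - m) / (real N * nu L alpha kappa rtr) * (kappa / ((1 + kappa) * (tau L alpha kappa rtr)\<^sup>2))"
  by (simp add: sinr_denom_def Let_def diff_divide_distrib[symmetric] algebra_simps)

lemma sinr_denom_ge:
  assumes "0 \<le> alpha" "0 \<le> kappa" "1 \<le> L" "0 < rtr" "0 < rho" "0 \<le> m"
  shows "real K / (real N * nu L alpha kappa rtr) * (Lbar L alpha kappa * (1 + kappa) / tau L alpha kappa rtr)
    \<le> sinr_denom N K L alpha kappa rtr rho m"
proof -
  have "0 < nu L alpha kappa rtr" "0 < tau L alpha kappa rtr"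
    using nu_pos[OF assms(1-4)] tau_pos[OF assms(1-4)] .
  moreover have "Lbar L alpha kappa - 1 / (1 + kappa) = alpha * (real L - 1)"
    by (simp add: Lbar_def)
  ultimately show ?thesis
    using assms by (simp add: sinr_denom_def Let_def)
qed

lemma sinr_denom_scaled:
  assumes "0 \<le> alpha" "0 \<le> kappa" "1 \<le> L" "0 < rtr" "0 < rho" "0 < N"
  defines "v \<equiv> nu L alpha kappa rtr"
  defines "p \<equiv> v * tau L alpha kappa rtr / (1 + kappa)"
  shows "p\<^sup>2 * sinr_denom N K L alpha kappa rtr rho m
    = p / (real N * rho) + real K * Lbar L alpha kappa * p / real N
      + m * (v / (1 + kappa)\<^sup>2) * (kappa / (1 + kappa)) / real N
      + (real L - 1) * (alpha * v / (1 + kappa))\<^sup>2"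
proof -
  define t where "t = tau L alpha kappa rtr"
  define c where "c = 1 + kappa"
  have "0 < v" "0 < t" "0 < c"
    unfolding v_def t_def c_def using nu_pos[OF assms(1-4)] tau_pos[OF assms(1-4)] assms(2) by auto
  have Lbar_minus: "Lbar L alpha kappa - 1 / c = alpha * (real L - 1)"
    by (simp add: Lbar_def c_def)
  show ?thesis
    using assms(5,6) \<open>0 < v\<close> \<open>0 < t\<close> \<open>0 < c\<close>
    unfolding sinr_denom_def Let_def p_def v_def[symmetric] t_def[symmetric] c_def[symmetric] Lbar_minus
    by (simp add: field_simps power2_eq_square)
qed

lemma phi_d_simple_own:
  assumes "0 \<le> alpha" "0 \<le> kappa" "1 \<le> L" "0 < rtr" "j < L"
  shows "phi (d_simple kappa alpha) L rtr j j k = nu L alpha kappa rtr / (1 + kappa)\<^sup>2"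
  by (simp add: phi_d_simple[OF assms] d_simple_def power2_eq_square)

lemma phi_d_simple_cross:
  assumes "0 \<le> alpha" "0 \<le> kappa" "1 \<le> L" "0 < rtr" "j < L" "l \<noteq> j"
  shows "phi (d_simple kappa alpha) L rtr j l k = alpha * nu L alpha kappa rtr / (1 + kappa)"
  using assms(6) by (simp add: phi_d_simple[OF assms(1-5)] d_simple_def)

context
  fixes N K L :: nat and alpha kappa rtr :: real and a :: "nat \<Rightarrow> nat \<Rightarrow> nat \<Rightarrow> complex"
  assumes L: "1 \<le> L" and alpha: "0 \<le> alpha" and kappa: "0 \<le> kappa" and rtr: "0 < rtr"
    and LoS_orth: "\<And>j i k. j < L \<Longrightarrow> i < K \<Longrightarrow> k < K \<Longrightarrow>
        gram N (hb_simple kappa a j i) (hb_simple kappa a j k)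
          = (if i = k then complex_of_real (kappa / (1 + kappa)) else 0)"
begin

lemma nrm_orthogonal_LoS: "j < L \<Longrightarrow> k < K \<Longrightarrow> nrm N (hb_simple kappa a) j k = kappa / (1 + kappa)"
  by (simp add: nrm_def LoS_orth)

lemma phi_plus_nrm_orthogonal_LoS:
  assumes "j < L" "k < K"
  shows "phi (d_simple kappa alpha) L rtr j j k + nrm N (hb_simple kappa a) j k
    = nu L alpha kappa rtr * tau L alpha kappa rtr / (1 + kappa)"
  by (simp add: phi_d_simple_own[OF alpha kappa L rtr assms(1)] nrm_orthogonal_LoS[OF assms]
      nu_mul_tau[OF alpha kappa L rtr])

lemma theta_bar_orthogonal_LoS:
  assumes "j < L" "0 < K"
  shows "theta_bar (d_simple kappa alpha) (hb_simple kappa a) N K L rtr j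
    = inverse (nu L alpha kappa rtr * tau L alpha kappa rtr / (1 + kappa))"
  using assms by (simp add: theta_bar_def phi_plus_nrm_orthogonal_LoS)

lemma sum_gram_other_users_orthogonal_LoS:
  assumes "j < L" "k < K"
  shows "(\<Sum>i\<in>{..<K} - {k}. (cmod (gram N (hb_simple kappa a j i) (hb_simple kappa a j k)))\<^sup>2) = 0"
    and "(\<Sum>i\<in>{..<K} - {k}. (cmod (gram N (hb_simple kappa a j k) (hb_simple kappa a j i)))\<^sup>2) = 0"
  using assms by (simp_all add: LoS_orth)

lemma gamma_MRC_orthogonal_LoS:
  assumes "0 < rho" "0 < N" "j < L" "k < K"
  shows "gamma_MRC (d_simple kappa alpha) (hb_simple kappa a) N K L rtr rho j k
    = 1 / sinr_denom N K L alpha kappa rtr rho (real K - 1)"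
proof -
  define v where "v = nu L alpha kappa rtr"
  define p where "p = v * tau L alpha kappa rtr / (1 + kappa)"
  have "0 < p"
    using nu_pos[OF alpha kappa L rtr] tau_pos[OF alpha kappa L rtr] kappa by (simp add: p_def v_def)
  have own: "phi (d_simple kappa alpha) L rtr j j k + nrm N (hb_simple kappa a) j k = p"
    using phi_plus_nrm_orthogonal_LoS[OF assms(3,4)] by (simp add: p_def v_def)
  have "(\<Sum>l<L. \<Sum>i<K. d_simple kappa alpha j l i * p) = real K * Lbar L alpha kappa * p"
    by (subst sum.swap) (simp add: sum_distrib_right[symmetric] sum_d_simple[OF assms(3)])
  moreover have "(\<Sum>i\<in>{..<K} - {k}. phi (d_simple kappa alpha) L rtr j j k * nrm N (hb_simple kappa a) j i)
      = (real K - 1) * (v / (1 + kappa)\<^sup>2) * (kappa / (1 + kappa))"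
    using assms(4)
    by (simp add: phi_d_simple_own[OF alpha kappa L rtr assms(3)] nrm_orthogonal_LoS[OF assms(3)]
        v_def of_nat_diff)
  ultimately have s: "s_MRC (d_simple kappa alpha) (hb_simple kappa a) N K L rtr j k
      = real K * Lbar L alpha kappa * p / real N
        + (real K - 1) * (v / (1 + kappa)\<^sup>2) * (kappa / (1 + kappa)) / real N"
    by (simp add: s_MRC_def own)
  have inter: "(\<Sum>l\<in>{..<L} - {j}. (phi (d_simple kappa alpha) L rtr j l k)\<^sup>2)
      = (real L - 1) * (alpha * v / (1 + kappa))\<^sup>2"
    using assms(3)
    by (simp add: phi_d_simple_cross[OF alpha kappa L rtr assms(3)] v_def of_nat_diff)
  have noise: "1 / (real N * rho * theta_bar (d_simple kappa alpha) (hb_simple kappa a) N K L rtr j)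
      = p / (real N * rho)"
    using assms(4) by (simp add: theta_bar_orthogonal_LoS[OF assms(3)] p_def v_def)
  have "gamma_MRC (d_simple kappa alpha) (hb_simple kappa a) N K L rtr rho j k
      = p\<^sup>2 / (p\<^sup>2 * sinr_denom N K L alpha kappa rtr rho (real K - 1))"
    unfolding gamma_MRC_def own noise s inter sum_gram_other_users_orthogonal_LoS[OF assms(3,4)]
      sinr_denom_scaled[OF alpha kappa L rtr assms(1,2), folded v_def, folded p_def]
    by simp
  then show ?thesis
    using \<open>0 < p\<close> by simp
qed

lemma gamma_MRT_orthogonal_LoS:
  assumes "0 < rho" "0 < N" "j < L" "k < K"
  shows "gamma_MRT (d_simple kappa alpha) (hb_simple kappa a) N K L rtr rho j k
    = 1 / sinr_denom N K L alpha kappa rtr rho (real K - 1)"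
proof -
  define v where "v = nu L alpha kappa rtr"
  define p where "p = v * tau L alpha kappa rtr / (1 + kappa)"
  have "0 < p"
    using nu_pos[OF alpha kappa L rtr] tau_pos[OF alpha kappa L rtr] kappa by (simp add: p_def v_def)
  have theta: "theta_bar (d_simple kappa alpha) (hb_simple kappa a) N K L rtr l = inverse p" if "l < L" for l
    using assms(4) by (simp add: theta_bar_orthogonal_LoS[OF that] p_def v_def)
  have "(\<Sum>l<L. \<Sum>i<K. theta_bar (d_simple kappa alpha) (hb_simple kappa a) N K L rtr l
          * d_simple kappa alpha l j k
          * (phi (d_simple kappa alpha) L rtr l l i + nrm N (hb_simple kappa a) l i))
      = (\<Sum>l<L. real K * d_simple kappa alpha j l k)"
    using \<open>0 < p\<close>
    by (intro sum.cong refl) (simp add: theta phi_plus_nrm_orthogonal_LoS d_simple_commute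
        p_def[symmetric] v_def[symmetric])
  also have "\<dots> = real K * Lbar L alpha kappa"
    by (simp add: sum_distrib_left[symmetric] sum_d_simple[OF assms(3)])
  finally have s: "s_MRT (d_simple kappa alpha) (hb_simple kappa a) N K L rtr j k
      = real K * Lbar L alpha kappa / real N
        + inverse p * ((real K - 1) * (v / (1 + kappa)\<^sup>2) * (kappa / (1 + kappa))) / real N"
    using assms(4)
    by (simp add: s_MRT_def theta[OF assms(3)] phi_d_simple_own[OF alpha kappa L rtr assms(3)]
        nrm_orthogonal_LoS[OF assms(3,4)] v_def of_nat_diff mult_ac)
  have inter: "(\<Sum>l\<in>{..<L} - {j}. theta_bar (d_simple kappa alpha) (hb_simple kappa a) N K L rtr l
          * (phi (d_simple kappa alpha) L rtr l j k)\<^sup>2)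
      = inverse p * ((real L - 1) * (alpha * v / (1 + kappa))\<^sup>2)"
    using assms(3)
    by (simp add: theta phi_d_simple_cross[OF alpha kappa L rtr] v_def of_nat_diff)
  have denom: "p * (1 / (real N * rho) + s_MRT (d_simple kappa alpha) (hb_simple kappa a) N K L rtr j k
        + theta_bar (d_simple kappa alpha) (hb_simple kappa a) N K L rtr j
          * (\<Sum>i\<in>{..<K} - {k}. (cmod (gram N (hb_simple kappa a j i) (hb_simple kappa a j k)))\<^sup>2)
        + (\<Sum>l\<in>{..<L} - {j}. theta_bar (d_simple kappa alpha) (hb_simple kappa a) N K L rtr l
          * (phi (d_simple kappa alpha) L rtr l j k)\<^sup>2))
      = p\<^sup>2 * sinr_denom N K L alpha kappa rtr rho (real K - 1)"
    unfolding s inter sum_gram_other_users_orthogonal_LoS[OF assms(3,4)]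
      sinr_denom_scaled[OF alpha kappa L rtr assms(1,2), folded v_def, folded p_def]
    using \<open>0 < p\<close> by (simp add: ring_distribs mult.assoc[symmetric] mult.commute[of p])
  have own: "phi (d_simple kappa alpha) L rtr j j k + nrm N (hb_simple kappa a) j k = p"
    using phi_plus_nrm_orthogonal_LoS[OF assms(3,4)] by (simp add: p_def v_def)
  have "gamma_MRT (d_simple kappa alpha) (hb_simple kappa a) N K L rtr rho j k
      = p\<^sup>2 / (p\<^sup>2 * sinr_denom N K L alpha kappa rtr rho (real K - 1))"
    unfolding gamma_MRT_def own theta[OF assms(3)] denom[symmetric]
    using \<open>0 < p\<close> by (simp add: power2_eq_square)
  then show ?thesis
    using \<open>0 < p\<close> by simp
qed

end

lemma sinr_lim1_eq_sinr_lim2: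
  assumes "0 \<le> alpha" "0 \<le> kappa" "1 \<le> L" "0 < rtr"
  shows "sinr_lim1 N K L alpha kappa rtr rho = sinr_lim2 N K L alpha kappa rtr rho"
proof -
  have "1 / (nu L alpha kappa rtr * real N * rho) = (1 / rtr + Lbar L alpha kappa) * (1 / (real N * rho))"
    "real K / (real N * nu L alpha kappa rtr) = real K / real N * (1 / rtr + Lbar L alpha kappa)"
    by (simp_all add: inverse_nu[OF assms, symmetric])
  then show ?thesis
    unfolding sinr_lim1_def sinr_lim2_def A_coef_def B_coef_def Let_def
    by (simp add: divide_inverse algebra_simps inverse_mult_distrib power_inverse)
qed

lemma inverse_diff_tendsto_zero:
  fixes x y :: "'a \<Rightarrow> real"
  assumes "0 < b" and bounds: "\<forall>\<^sub>F n in F. b \<le> x n \<and> x n \<le> y n"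
    and gap: "((\<lambda>n. y n - x n) \<longlongrightarrow> 0) F"
  shows "((\<lambda>n. inverse (x n) - inverse (y n)) \<longlongrightarrow> 0) F"
proof (rule tendsto_sandwich)
  show "\<forall>\<^sub>F n in F. 0 \<le> inverse (x n) - inverse (y n)"
    using bounds by eventually_elim (use \<open>0 < b\<close> le_imp_inverse_le in force)
  show "\<forall>\<^sub>F n in F. inverse (x n) - inverse (y n) \<le> (y n - x n) / b\<^sup>2"
    using bounds
  proof eventually_elim
    case (elim n)
    then have "0 < x n" "0 < y n" using \<open>0 < b\<close> by linarith+
    have "b\<^sup>2 \<le> x n * y n"
      unfolding power2_eq_square using elim \<open>0 < b\<close> by (intro mult_mono) auto
    then have "(y n - x n) / (x n * y n) \<le> (y n - x n) / b\<^sup>2"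
      using elim \<open>0 < b\<close> by (intro divide_left_mono) auto
    then show ?case
      using \<open>0 < x n\<close> \<open>0 < y n\<close> by (simp add: field_simps)
  qed
  show "((\<lambda>n. (y n - x n) / b\<^sup>2) \<longlongrightarrow> 0) F"
    using tendsto_divide[OF gap tendsto_const, of "b\<^sup>2"] \<open>0 < b\<close> by simp
qed (rule tendsto_const)

lemma eventually_less_if_limsup_finite:
  fixes f :: "nat \<Rightarrow> real"
  assumes "limsup (\<lambda>n. ereal (f n)) < \<infinity>"
  obtains M where "0 < M" "\<forall>\<^sub>F n in sequentially. f n < M"
proof -
  obtain m :: nat where "limsup (\<lambda>n. ereal (f n)) < ereal (real m)"
    using assms less_PInf_Ex_of_nat by auto
  then have "\<forall>\<^sub>F n in sequentially. f n < real m + 1"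
    by (rule eventually_mono[OF Limsup_lessD]) simp
  then show ?thesis
    using that[of "real m + 1"] by simp
qed

lemma sinr_denom_gap_tendsto_zero:
  fixes N K :: "nat \<Rightarrow> nat"
  assumes "0 \<le> alpha" "0 \<le> kappa" "1 \<le> L" "0 < rtr" "0 < rho"
    and N_lim: "filterlim N at_top sequentially" and K_lim: "filterlim K at_top sequentially"
    and "0 < M"
    and ratio: "\<forall>\<^sub>F n in sequentially. real (N n) / real (K n) < M"
  shows "((\<lambda>n. inverse (sinr_denom (N n) (K n) L alpha kappa rtr rho (real (K n) - 1))
      - inverse (sinr_denom (N n) (K n) L alpha kappa rtr rho (real (K n)))) \<longlongrightarrow> 0) sequentially"
proof (rule inverse_diff_tendsto_zero)
  define v where "v = nu L alpha kappa rtr"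
  define t where "t = tau L alpha kappa rtr"
  define Q where "Q = Lbar L alpha kappa * (1 + kappa) / t"
  have "0 < v" "0 < t" "0 < Q"
    using nu_pos[OF assms(1-4)] tau_pos[OF assms(1-4)] Lbar_pos[OF assms(1-3)] assms(2)
    by (simp_all add: v_def t_def Q_def)
  then show "0 < Q / (M * v)"
    using \<open>0 < M\<close> by simp
  have gap: "sinr_denom (N n) (K n) L alpha kappa rtr rho (real (K n))
      - sinr_denom (N n) (K n) L alpha kappa rtr rho (real (K n) - 1)
      = kappa / ((1 + kappa) * t\<^sup>2 * v) / real (N n)" for n
    by (simp add: sinr_denom_diff v_def t_def)
  have "\<forall>\<^sub>F n in sequentially. 1 \<le> N n" "\<forall>\<^sub>F n in sequentially. 1 \<le> K n"
    using N_lim K_lim by (simp_all add: filterlim_at_top)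
  with ratio show "\<forall>\<^sub>F n in sequentially.
      Q / (M * v) \<le> sinr_denom (N n) (K n) L alpha kappa rtr rho (real (K n) - 1)
      \<and> sinr_denom (N n) (K n) L alpha kappa rtr rho (real (K n) - 1)
        \<le> sinr_denom (N n) (K n) L alpha kappa rtr rho (real (K n))"
  proof eventually_elim
    case (elim n)
    then have "1 / M \<le> real (K n) / real (N n)"
      using elim \<open>0 < M\<close> by (simp add: field_simps)
    then have "Q / (M * v) \<le> real (K n) / (real (N n) * v) * Q"
      using mult_right_mono[of "1 / M" "real (K n) / real (N n)" "Q / v"] \<open>0 < v\<close> \<open>0 < Q\<close>
      by (simp add: mult.commute)
    also have "\<dots> \<le> sinr_denom (N n) (K n) L alpha kappa rtr rho (real (K n) - 1)"
      using sinr_denom_ge[OF assms(1-5)] elim by (simp add: v_def Q_def t_def)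
    finally have "Q / (M * v) \<le> sinr_denom (N n) (K n) L alpha kappa rtr rho (real (K n) - 1)" .
    moreover have "0 \<le> kappa / ((1 + kappa) * t\<^sup>2 * v) / real (N n)"
      using assms(2) \<open>0 < t\<close> \<open>0 < v\<close> by simp
    ultimately show ?case
      using gap[of n] by linarith
  qed
  have "filterlim (\<lambda>n. real (N n)) at_infinity sequentially"
    by (rule filterlim_at_top_imp_at_infinity[OF filterlim_compose[OF filterlim_real_sequentially N_lim]])
  then show "((\<lambda>n. sinr_denom (N n) (K n) L alpha kappa rtr rho (real (K n))
      - sinr_denom (N n) (K n) L alpha kappa rtr rho (real (K n) - 1)) \<longlongrightarrow> 0) sequentially"
    unfolding gap by (rule tendsto_divide_0[OF tendsto_const])
qed

theorem corollary5:
  fixes L :: nat and alpha kappa rtr rho :: real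
    and N K :: "nat \<Rightarrow> nat"
    and a :: "nat \<Rightarrow> nat \<Rightarrow> nat \<Rightarrow> nat \<Rightarrow> complex"
  assumes L: "L \<ge> 1"
    and alpha: "0 < alpha" "alpha \<le> 1"
    and kappa: "0 \<le> kappa"
    and rtr: "0 < rtr"
    and rho: "0 < rho"
    and N_lim: "filterlim N at_top sequentially"
    and K_lim: "filterlim K at_top sequentially"
    and ratio_liminf: "1 \<le> liminf (\<lambda>n. ereal (real (N n) / real (K n)))"
    and ratio_limsup: "limsup (\<lambda>n. ereal (real (N n) / real (K n))) < \<infinity>"
    and LoS_orth: "\<And>n j i k. j < L \<Longrightarrow> i < K n \<Longrightarrow> k < K n \<Longrightarrow>
        gram (N n) (hb_simple kappa (a n) j i) (hb_simple kappa (a n) j k)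
          = (if i = k then complex_of_real (kappa / (1 + kappa)) else 0)"
  shows "(\<forall>n. sinr_lim1 (N n) (K n) L alpha kappa rtr rho
               = sinr_lim2 (N n) (K n) L alpha kappa rtr rho)
    \<and> (\<forall>e > 0. \<forall>\<^sub>F n in sequentially. \<forall>j < L. \<forall>k < K n.
          \<bar>gamma_MRC (d_simple kappa alpha) (hb_simple kappa (a n)) (N n) (K n) L rtr rho j k
             - sinr_lim1 (N n) (K n) L alpha kappa rtr rho\<bar> < e
        \<and> \<bar>gamma_MRT (d_simple kappa alpha) (hb_simple kappa (a n)) (N n) (K n) L rtr rho j k
             - sinr_lim1 (N n) (K n) L alpha kappa rtr rho\<bar> < e)"
proof (intro conjI allI impI)
  show "sinr_lim1 (N n) (K n) L alpha kappa rtr rho = sinr_lim2 (N n) (K n) L alpha kappa rtr rho" for n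
    using sinr_lim1_eq_sinr_lim2 alpha(1) kappa L rtr by simp
  fix e :: real
  assume "0 < e"
  obtain M where "0 < M" "\<forall>\<^sub>F n in sequentially. real (N n) / real (K n) < M"
    using eventually_less_if_limsup_finite[OF ratio_limsup] .
  from tendstoD[OF sinr_denom_gap_tendsto_zero[OF _ kappa L rtr rho N_lim K_lim this] \<open>0 < e\<close>]
  have gap: "\<forall>\<^sub>F n in sequentially.
      \<bar>1 / sinr_denom (N n) (K n) L alpha kappa rtr rho (real (K n) - 1)
        - sinr_lim1 (N n) (K n) L alpha kappa rtr rho\<bar> < e"
    using alpha(1) by (simp add: sinr_lim1_eq_sinr_denom dist_real_def divide_inverse)
  have "\<forall>\<^sub>F n in sequentially. 1 \<le> N n"
    using N_lim by (simp add: filterlim_at_top)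
  with gap show "\<forall>\<^sub>F n in sequentially. \<forall>j < L. \<forall>k < K n.
      \<bar>gamma_MRC (d_simple kappa alpha) (hb_simple kappa (a n)) (N n) (K n) L rtr rho j k
         - sinr_lim1 (N n) (K n) L alpha kappa rtr rho\<bar> < e
    \<and> \<bar>gamma_MRT (d_simple kappa alpha) (hb_simple kappa (a n)) (N n) (K n) L rtr rho j k
         - sinr_lim1 (N n) (K n) L alpha kappa rtr rho\<bar> < e"
  proof eventually_elim
    case (elim n)
    then show ?case
      using gamma_MRC_orthogonal_LoS[OF L _ kappa rtr LoS_orth[where n = n]]
        gamma_MRT_orthogonal_LoS[OF L _ kappa rtr LoS_orth[where n = n]] alpha(1) rho
      by simp
  qed
qed

end
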